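(* Let $\mathbf k$ be a commutative ring with identity, $X$ a set, and $\Delta$ the coproduct on $\mathcal N(X)$ defined in the context. Then for all $u,v\in M(X)$, $\Delta(u\diamond v)=\Delta(u)\diamond\Delta(v)$.
   Context: Let $M(X)$ be the free monoid on $X$ with identity $\mathbf 1$ and $S(X)=M(X)\setminus\{\mathbf 1\}$. For a set $Y$ write $\lfloor Y\rfloor=\{\lfloor y\rfloor: y\in Y\}$ for a disjoint copy of $Y$. Bracketed words: $\mathfrak M_0=M(X)$, $\mathfrak M_{n+1}=M(X\sqcup\lfloor\mathfrak M_n\rfloor)$, $\mathfrak M(X)=\bigcup_n\mathfrak M_n$ (monoid under concatenation); $\mathrm{dep}(w)$ is the least $n$ with $w\in\mathfrak M_n$; every $w\ne\mathbf 1$ has a unique standard decomposition $w=w_1\cdots w_m$ with factors alternately in $S(X)$ and $\lfloor\mathfrak M(X)\rfloor$ ($m$ = breadth). $\mathfrak X_0=M(X)$; for $n\ge1$, $\mathfrak X_n$ consists of $\mathbf 1$ and all words $w_1\cdots w_m$ ($m\ge1$) with factors alternately in $S(X)$ and $\lfloor\mathfrak X_{n-1}\rfloor$; $\mathfrak X_\infty=\bigcup_n\mathfrak X_n$. $\mathcal N(X)=\mathbf k\mathfrak X_\infty$ (free $\mathbf k$-module), $N_X(w)=\lfloor w\rfloor$ extended linearly (also written $\lfloor a\rfloor$). Product $\diamond$ (bilinear, by induction on $\mathrm{dep}(w)+\mathrm{dep}(w')$): $\mathbf 1$ is the identity; for breadth-one $w,w'\ne\mathbf 1$: $w\diamond w'=ww'$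 if one of them is in $S(X)$, and $\lfloor\bar w\rfloor\diamond\lfloor\bar w'\rfloor=\lfloor\lfloor\bar w\rfloor\diamond\bar w'\rfloor+\lfloor\bar w\diamond\lfloor\bar w'\rfloor\rfloor-\lfloor\lfloor\bar w\diamond\bar w'\rfloor\rfloor$; in general $w\diamond w'=w_1\cdots w_{m-1}(w_m\diamond w'_1)w'_2\cdots w'_{m'}$ for standard decompositions. $(\mathcal N(X),\diamond,N_X)$ is an associative unital algebra with identity $\mathbf 1$ and Nijenhuis operator $N_X$ (the free Nijenhuis algebra on $X$). A sequence $w_1,\dots,w_m$ in $\mathcal I:=X\sqcup\lfloor\mathfrak X_\infty\rfloor$ is alternating if for each $i$ at least one of $w_i,w_{i+1}$ lies in $X$. Every $w\in\mathfrak X_\infty\setminus\{\mathbf 1\}$ can be written uniquely as $w=w_1\diamond\cdots\diamond w_m$ (equal to the concatenation $w_1\cdots w_m$) with $w_1,\dots,w_m$ alternating in $\mathcal I$; $m=\mathrm{wid}(w)$ is the width, $\mathrm{wid}(\mathbf 1)=0$. $\mathcal N(X)\otimes\mathcal N(X)$ carries the product $(a\otimes b)\diamond(a'\otimes b')=(a\diamond a')\otimes(b\diamond b')$. The linear map $\Delta:\mathcal N(X)\to\mathcal N(X)\otimes\mathcal N(X)$ is defined on $\mathfrak X_\infty$ by induction on depth: $\Delta(\mathbf 1)=\mathbf 1\otimes\mathbf 1$; $\Delta(x)=\mathbf 1\otimes x$ for $x\in X$; $\Delta(x_1\cdots x_m)=\Delta(x_1)\diamond\cdots\diamond\Delta(x_m)$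 for $x_i\in X$, $m\ge2$; $\Delta(\lfloor\bar w\rfloor)=(\mathrm{id}\otimes N_X)\Delta(\bar w)$ for $\bar w\in\mathfrak X_\infty$; and if $w$ has $\diamond$-factorization $w=w_1\diamond\cdots\diamond w_m$ with $m\ge2$, $\Delta(w)=\Delta(w_1)\diamond\cdots\diamond\Delta(w_m)$. *)

theory Defs
  imports Main "HOL-Library.Poly_Mapping"
begin

text \<open>A letter is either a generator x from X (Lt x) or a bracketed word (Brk w).
  A bracketed word is a list of letters; the empty list is the identity 1.
  The free monoid M(X) corresponds to the words map Lt u with u :: 'a list.\<close>

datatype 'a letter = Lt 'a | Brk "'a letter list"

type_synonym 'a bword = "'a letter list"

text \<open>The set X_infinity: no two adjacent brackets, recursively inside brackets.\<close>

fun is_br :: "'a letter \<Rightarrow> bool" where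
  "is_br (Lt x) = False"
| "is_br (Brk w) = True"

fun valid_word :: "'a bword \<Rightarrow> bool" and valid_letter :: "'a letter \<Rightarrow> bool" where
  "valid_word [] = True"
| "valid_word [l] = valid_letter l"
| "valid_word (l # l' # ls) =
     (valid_letter l \<and> \<not> (is_br l \<and> is_br l') \<and> valid_word (l' # ls))"
| "valid_letter (Lt x) = True"
| "valid_letter (Brk w) = valid_word w"

text \<open>N(X) = k X_infinity is the part of the module over 'a bword supported on valid words.
  N(X) \<otimes> N(X) is identified with the free module on pairs of basis words.\<close>

definition smul :: "'k::comm_ring_1 \<Rightarrow> ('b \<Rightarrow>\<^sub>0 'k) \<Rightarrow> ('b \<Rightarrow>\<^sub>0 'k)" where
  "smul a p = Poly_Mapping.map (\<lambda>c. a * c) p"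

definition basis :: "'b \<Rightarrow> ('b \<Rightarrow>\<^sub>0 'k::comm_ring_1)" where
  "basis b = Poly_Mapping.single b 1"

definition lin :: "('b \<Rightarrow> ('c \<Rightarrow>\<^sub>0 'k::comm_ring_1)) \<Rightarrow> ('b \<Rightarrow>\<^sub>0 'k) \<Rightarrow> ('c \<Rightarrow>\<^sub>0 'k)" where
  "lin f p = (\<Sum>b\<in>Poly_Mapping.keys p. smul (Poly_Mapping.lookup p b) (f b))"

definition bilin :: "('b \<Rightarrow> 'c \<Rightarrow> ('d \<Rightarrow>\<^sub>0 'k::comm_ring_1))
    \<Rightarrow> ('b \<Rightarrow>\<^sub>0 'k) \<Rightarrow> ('c \<Rightarrow>\<^sub>0 'k) \<Rightarrow> ('d \<Rightarrow>\<^sub>0 'k)" where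
  "bilin f p q = lin (\<lambda>b. lin (\<lambda>c. f b c) q) p"

definition NX :: "('a bword \<Rightarrow>\<^sub>0 'k::comm_ring_1) \<Rightarrow> ('a bword \<Rightarrow>\<^sub>0 'k)" where
  "NX = lin (\<lambda>w. basis [Brk w])"

text \<open>On basis words: if one factor is 1, or the last letter of w or the first letter of w'
  lies in X, the product is concatenation; otherwise w = p \<lfloor>a\<rfloor>, w' = \<lfloor>b\<rfloor> q and
  w \<diamond> w' = p (\<lfloor>\<lfloor>a\<rfloor> \<diamond> b\<rfloor> + \<lfloor>a \<diamond> \<lfloor>b\<rfloor>\<rfloor> - \<lfloor>\<lfloor>a \<diamond> b\<rfloor>\<rfloor>) q.\<close>

lemma dia_w_term_last:
  "w \<noteq> [] \<Longrightarrow> Brk a = last w \<Longrightarrow> size_list size a + 2 \<le> size_list size w"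
  by (induction w) (auto split: if_splits)

lemma dia_w_term_hd:
  "w \<noteq> [] \<Longrightarrow> Brk a = hd w \<Longrightarrow> size_list size a + 2 \<le> size_list size w"
  by (cases w) auto

function dia_w :: "'a bword \<Rightarrow> 'a bword \<Rightarrow> ('a bword \<Rightarrow>\<^sub>0 'k::comm_ring_1)" where
  "dia_w w w' =
     (if w = [] \<or> w' = [] then basis (w @ w')
      else (case (last w, hd w') of
              (Brk a, Brk b) \<Rightarrow>
                 lin (\<lambda>c. basis (butlast w @ c @ tl w'))
                   (NX (dia_w [Brk a] b) + NX (dia_w a [Brk b]) - NX (NX (dia_w a b)))
            | _ \<Rightarrow> basis (w @ w')))"
  by pat_completeness auto
termination
  apply (relation "measure (\<lambda>(w, w'). size_list size w + size_list size w')")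
    apply simp
   apply (simp_all only: in_measure split)
   apply auto
  subgoal premises p for w w' a b
    using dia_w_term_last[OF p(1) p(3)] dia_w_term_hd[OF p(2) p(4)] by (simp flip: p(3))
  subgoal premises p for w w' a b
    using dia_w_term_last[OF p(1) p(3)] dia_w_term_hd[OF p(2) p(4)] by (simp flip: p(4))
  subgoal premises p for w w' a b
    using dia_w_term_last[OF p(1) p(3)] dia_w_term_hd[OF p(2) p(4)] by simp
  done

definition dia :: "('a bword \<Rightarrow>\<^sub>0 'k::comm_ring_1) \<Rightarrow> ('a bword \<Rightarrow>\<^sub>0 'k) \<Rightarrow> ('a bword \<Rightarrow>\<^sub>0 'k)"
  (infixl \<open>\<diamond>\<close> 70) where
  "p \<diamond> q = bilin dia_w p q"

definition tensor :: "('a bword \<Rightarrow>\<^sub>0 'k::comm_ring_1) \<Rightarrow> ('a bword \<Rightarrow>\<^sub>0 'k)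
    \<Rightarrow> ('a bword \<times> 'a bword \<Rightarrow>\<^sub>0 'k)" where
  "tensor p q = bilin (\<lambda>c d. basis (c, d)) p q"

definition tdia :: "('a bword \<times> 'a bword \<Rightarrow>\<^sub>0 'k::comm_ring_1)
    \<Rightarrow> ('a bword \<times> 'a bword \<Rightarrow>\<^sub>0 'k) \<Rightarrow> ('a bword \<times> 'a bword \<Rightarrow>\<^sub>0 'k)" where
  "tdia P Q = bilin (\<lambda>(w1, w2) (w1', w2'). tensor (dia_w w1 w1') (dia_w w2 w2')) P Q"

definition id_NX :: "('a bword \<times> 'a bword \<Rightarrow>\<^sub>0 'k::comm_ring_1) \<Rightarrow> ('a bword \<times> 'a bword \<Rightarrow>\<^sub>0 'k)" where
  "id_NX = lin (\<lambda>(w1, w2). basis (w1, [Brk w2]))"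

text \<open>For w in X_infinity the alternating factorisation w = w_1 \<diamond> ... \<diamond> w_m into elements
  of X \<squnion> \<lfloor>X_infinity\<rfloor> is exactly the splitting into letters.
  \<Delta>(1) = 1\<otimes>1, \<Delta>(x) = 1\<otimes>x, \<Delta>(\<lfloor>w\<rfloor>) = (id\<otimes>N_X)\<Delta>(w),
  \<Delta>(w_1 ... w_m) = \<Delta>(w_1) \<diamond> ... \<diamond> \<Delta>(w_m) for m \<ge> 2.\<close>

fun Delta_w :: "'a bword \<Rightarrow> ('a bword \<times> 'a bword \<Rightarrow>\<^sub>0 'k::comm_ring_1)"
and Delta_l :: "'a letter \<Rightarrow> ('a bword \<times> 'a bword \<Rightarrow>\<^sub>0 'k::comm_ring_1)" where
  "Delta_w [] = basis ([], [])"
| "Delta_w [l] = Delta_l l"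
| "Delta_w (l # l' # ls) = tdia (Delta_l l) (Delta_w (l' # ls))"
| "Delta_l (Lt x) = basis ([], [Lt x])"
| "Delta_l (Brk w) = id_NX (Delta_w w)"

definition Delta :: "('a bword \<Rightarrow>\<^sub>0 'k::comm_ring_1) \<Rightarrow> ('a bword \<times> 'a bword \<Rightarrow>\<^sub>0 'k)" where
  "Delta = lin Delta_w"

end

theory Submission
  imports Defs
begin

text \<open>On words of M(X) no two brackets ever meet, so \<diamond> is plain concatenation and
  \<Delta>(u) = 1 \<otimes> u; hence both sides equal (1 \<otimes> u) \<diamond> (1 \<otimes> v) = 1 \<otimes> uv.\<close>

declare dia_w.simps [simp del]

lemma smul_one [simp]: "smul 1 p = p"
  unfolding smul_def by transfer (auto simp: fun_eq_iff when_def)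

lemma lin_basis [simp]: "lin f (basis b :: _ \<Rightarrow>\<^sub>0 'k::comm_ring_1) = f b"
  unfolding lin_def basis_def by simp

lemma bilin_basis [simp]: "bilin f (basis b) (basis c) = f b c"
  unfolding bilin_def by simp

lemma tensor_basis [simp]: "tensor (basis w) (basis w') = basis (w, w')"
  unfolding tensor_def by simp

lemma tdia_basis [simp]:
  "tdia (basis (w1, w2)) (basis (w1', w2')) = tensor (dia_w w1 w1') (dia_w w2 w2')"
  unfolding tdia_def by simp

lemma dia_w_eq_append:
  assumes "w = [] \<or> w' = [] \<or> \<not> is_br (last w)"
  shows "dia_w w w' = basis (w @ w')"
  using assms by (subst dia_w.simps) (auto split: letter.split)

lemma dia_w_Nil_left [simp]: "dia_w [] w = basis w"
  by (simp add: dia_w_eq_append)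

lemma dia_w_map_Lt: "dia_w (map Lt u) w' = basis (map Lt u @ w')"
  by (rule dia_w_eq_append) (auto simp: last_map)

lemma dia_map_Lt: "basis (map Lt u) \<diamond> basis (map Lt v) = basis (map Lt (u @ v))"
  unfolding dia_def by (simp add: dia_w_map_Lt)

lemma Delta_w_map_Lt: "Delta_w (map Lt u) = basis ([], map Lt u)"
proof (induction u rule: induct_list012)
  case (3 x y u)
  then show ?case by (simp add: dia_w_eq_append)
qed simp_all

lemma Delta_basis_map_Lt: "Delta (basis (map Lt u)) = basis ([], map Lt u)"
  unfolding Delta_def by (simp add: Delta_w_map_Lt)

theorem mainTheorem3:
  fixes u v :: "'a list"
  shows "(Delta ((basis (map Lt u) :: 'a bword \<Rightarrow>\<^sub>0 'k::comm_ring_1) \<diamond> basis (map Lt v)) :: 'a bword \<times> 'a bword \<Rightarrow>\<^sub>0 'k)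
       = tdia (Delta (basis (map Lt u))) (Delta (basis (map Lt v)))"
proof -
  have "tdia (Delta (basis (map Lt u))) (Delta (basis (map Lt v)))
      = tensor (dia_w [] []) (dia_w (map Lt u) (map Lt v) :: 'a bword \<Rightarrow>\<^sub>0 'k)"
    by (simp add: Delta_basis_map_Lt)
  also have "\<dots> = basis ([], map Lt (u @ v))"
    by (simp add: dia_w_map_Lt)
  also have "\<dots> = Delta (basis (map Lt u) \<diamond> basis (map Lt v))"
    by (simp only: dia_map_Lt Delta_basis_map_Lt)
  finally show ?thesis ..
qed

end
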